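(* Let $m\in\mathbb{N}$ and $n\in\mathbb{N}_0$ with $1\le m\le n$, $\theta'\in[0,\pi]$, and $\phi,\phi'\in[0,2\pi)$. Then \[ \int_0^\pi P_n(\cos\gamma)\,\mathrm{P}^m_n(\cos\theta)\,\frac{1}{\sin\theta}\,d\theta=\frac{2}{m}\,\mathrm{P}^m_n(\cos\theta')\cos(m(\phi-\phi')), \] where $\cos\gamma=\cos\theta\cos\theta'+\sin\theta\sin\theta'\cos(\phi-\phi')$.
   Context: $P_n$ is the Legendre polynomial, $P_n(z)={}_2F_1\!\left(-n,n+1;1;\frac{1-z}{2}\right)$. $\mathrm{P}^m_n$ is the Ferrers function of the first kind: for integers $0\le m\le n$ and $x\in[-1,1]$, $\mathrm{P}^m_n(x)=(-1)^m(1-x^2)^{m/2}\frac{d^m}{dx^m}P_n(x)$. *)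

theory Defs
  imports "HOL-Analysis.Analysis" "HOL-Computational_Algebra.Polynomial"
begin

text \<open>Legendre polynomial P_n(z) = 2F1(-n, n+1; 1; (1-z)/2), as a real polynomial.
  The hypergeometric series terminates since (-n)_k = 0 for k > n.\<close>
definition legendre_poly :: "nat \<Rightarrow> real poly" where
  "legendre_poly n = (\<Sum>k\<le>n. smult (pochhammer (- real n) k * pochhammer (real n + 1) k
       / (fact k)^2) ([:1/2, -1/2:] ^ k))"

definition legendre :: "nat \<Rightarrow> real \<Rightarrow> real" where
  "legendre n z = poly (legendre_poly n) z"

definition ferrers :: "nat \<Rightarrow> nat \<Rightarrow> real \<Rightarrow> real" where
  "ferrers m n x = (-1)^m * (1 - x^2) powr (real m / 2) * poly ((pderiv ^^ m) (legendre_poly n)) x"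

end

theory Submission
  imports Defs
begin

text \<open>
  Write \<open>x = cos \<theta>'\<close>, \<open>s = sin \<theta>'\<close>, \<open>c = cos (\<phi> - \<phi>')\<close>, \<open>m = k + 1\<close>, and let \<open>Q\<close> be the
  \<open>m\<close>-th derivative of \<open>P_n\<close>. For \<open>0 < \<theta> < pi\<close> the integrand equals
  \<open>(-1)^m P_n(x cos \<theta> + s sin \<theta> c) sin^k \<theta> Q(cos \<theta>)\<close>, so the integral is a polynomial \<open>p(c)\<close> of
  degree at most \<open>n\<close>. Since \<open>P_n(cos \<gamma>)\<close> satisfies Legendre's equation on the sphere and
  \<open>sin^m \<theta> Q(cos \<theta>)\<close> the associated Legendre equation in \<open>\<theta>\<close>, Green's identity in \<open>\<theta>\<close> shows that
  \<open>p\<close> solves Chebyshev's equation \<open>(1 - c^2) p'' - c p' + m^2 p = 0\<close>. Hence \<open>p\<close> is a multiple of the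
  Chebyshev polynomial \<open>T_m\<close>, and \<open>T_m(cos (\<phi> - \<phi>')) = cos (m (\<phi> - \<phi>'))\<close>. The multiple is read
  off from the coefficient of \<open>c^m\<close>; after substituting \<open>y = cos \<theta>\<close> it is given by the reproducing
  identity \<open>\<integral>(1 - y^2)^k Q(x y) Q(y) dy = 2^m k! Q(x)\<close> over \<open>[-1, 1]\<close>, which follows by integrating
  by parts against the Gegenbauer equation satisfied by \<open>Q\<close>.
\<close>

section \<open>Gegenbauer operators\<close>

lemma poly_ext:
  fixes p q :: "'a :: {comm_ring_1, ring_no_zero_divisors, ring_char_0} poly"
  shows "(\<And>x. poly p x = poly q x) \<Longrightarrow> p = q"
  by (simp add: poly_eq_poly_eq_iff[symmetric] fun_eq_iff)

definition gegenbauer_op :: "real \<Rightarrow> real \<Rightarrow> real poly \<Rightarrow> real poly" where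
  "gegenbauer_op a b q = [:1, 0, -1:] * pderiv (pderiv q) - smult a ([:0, 1:] * pderiv q) + smult b q"

lemma poly_gegenbauer_op:
  "poly (gegenbauer_op a b q) x
     = (1 - x\<^sup>2) * poly (pderiv (pderiv q)) x - a * x * poly (pderiv q) x + b * poly q x"
  by (simp add: gegenbauer_op_def algebra_simps power2_eq_square)

lemma coeff_gegenbauer_op:
  "coeff (gegenbauer_op a b q) k
     = (real k + 1) * (real k + 2) * coeff q (k + 2)
       + (b - real k * (real k - 1) - a * real k) * coeff q k"
proof (cases k)
  case 0
  then show ?thesis by (simp add: gegenbauer_op_def coeff_pderiv)
next
  case (Suc i)
  then show ?thesis
    by (cases i) (simp_all add: gegenbauer_op_def coeff_pderiv algebra_simps)
qed

lemma gegenbauer_op_diff: "gegenbauer_op a b (p - q) = gegenbauer_op a b p - gegenbauer_op a b q"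
  by (rule poly_ext) (simp add: poly_gegenbauer_op pderiv_diff algebra_simps)

lemma gegenbauer_op_smult: "gegenbauer_op a b (smult c p) = smult c (gegenbauer_op a b p)"
  by (rule poly_ext) (simp add: poly_gegenbauer_op pderiv_smult algebra_simps)

lemma pderiv_gegenbauer_op: "pderiv (gegenbauer_op a b q) = gegenbauer_op (a + 2) (b - a) (pderiv q)"
  by (rule poly_ext)
     (auto simp: gegenbauer_op_def pderiv_add pderiv_diff pderiv_mult pderiv_smult pderiv_minus
        pderiv_pCons algebra_simps)

lemma higher_pderiv_gegenbauer_op:
  "(pderiv ^^ j) (gegenbauer_op a b q)
     = gegenbauer_op (a + 2 * real j) (b - real j * a - real j * (real j - 1)) ((pderiv ^^ j) q)"
proof (induction j)
  case (Suc j)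
  then show ?case by (simp add: pderiv_gegenbauer_op algebra_simps)
qed simp

section \<open>Legendre polynomials\<close>

definition legendre_hyp_coeff :: "nat \<Rightarrow> nat \<Rightarrow> real" where
  "legendre_hyp_coeff n k = pochhammer (- real n) k * pochhammer (real n + 1) k / (fact k)\<^sup>2"

definition legendre_hyp_poly :: "nat \<Rightarrow> real poly" where
  "legendre_hyp_poly n = (\<Sum>k\<le>n. monom (legendre_hyp_coeff n k) k)"

lemma coeff_legendre_hyp_poly: "coeff (legendre_hyp_poly n) k = legendre_hyp_coeff n k"
  by (auto simp: legendre_hyp_poly_def coeff_sum coeff_monom legendre_hyp_coeff_def
      pochhammer_eq_0_iff not_le)

lemma legendre_hyp_coeff_Suc:
  "(real k + 1)\<^sup>2 * legendre_hyp_coeff n (Suc k)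
     = (real k - real n) * (real k + real n + 1) * legendre_hyp_coeff n k"
proof -
  have "(fact (Suc k) :: real)\<^sup>2 = (fact k)\<^sup>2 * (real k + 1)\<^sup>2"
    by (simp add: power2_eq_square algebra_simps)
  then show ?thesis
    by (simp add: legendre_hyp_coeff_def pochhammer_Suc field_simps)
qed

lemma coeff_hypergeometric_op:
  "coeff ([:0, 1, -1:] * pderiv (pderiv F) + [:1, -2:] * pderiv F + smult c F) k
     = (real k + 1)\<^sup>2 * coeff F (Suc k) + (c - real k * (real k + 1)) * coeff F k"
proof (cases k)
  case 0
  then show ?thesis by (simp add: coeff_pderiv)
next
  case (Suc i)
  then show ?thesis
    by (cases i) (simp_all add: coeff_pderiv algebra_simps power2_eq_square)
qed

text \<open>Gauss's hypergeometric equation for \<open>2F1(-n, n + 1; 1; z)\<close>.\<close>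
lemma legendre_hyp_poly_ode:
  "[:0, 1, -1:] * pderiv (pderiv (legendre_hyp_poly n)) + [:1, -2:] * pderiv (legendre_hyp_poly n)
     + smult (real n * (real n + 1)) (legendre_hyp_poly n) = 0"
  by (rule poly_eqI, unfold coeff_hypergeometric_op coeff_legendre_hyp_poly legendre_hyp_coeff_Suc)
     (simp add: algebra_simps)

lemma legendre_poly_eq_pcompose: "legendre_poly n = pcompose (legendre_hyp_poly n) [:1/2, -1/2:]"
  by (rule poly_ext)
     (simp add: legendre_poly_def legendre_hyp_poly_def poly_pcompose poly_sum poly_monom
        legendre_hyp_coeff_def)

lemma legendre_poly_ode: "gegenbauer_op 2 (real n * (real n + 1)) (legendre_poly n) = 0"
proof (rule poly_ext)
  fix x :: real
  let ?F = "legendre_hyp_poly n"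
  define z where "z = 1/2 - x/2"
  have d1: "pderiv (legendre_poly n) = pcompose (pderiv ?F) [:1/2, -1/2:] * [:-1/2:]"
    by (simp add: legendre_poly_eq_pcompose pderiv_pcompose pderiv_pCons)
  have d2: "pderiv (pderiv (legendre_poly n)) = pcompose (pderiv (pderiv ?F)) [:1/2, -1/2:] * [:1/4:]"
    by (simp add: d1 pderiv_pcompose pderiv_pCons pderiv_mult pderiv_minus pderiv_smult)
  have p0: "poly (legendre_poly n) x = poly ?F z"
    by (simp add: legendre_poly_eq_pcompose poly_pcompose z_def)
  have p1: "poly (pderiv (legendre_poly n)) x = - poly (pderiv ?F) z / 2"
    by (simp add: d1 poly_pcompose z_def)
  have p2: "poly (pderiv (pderiv (legendre_poly n))) x = poly (pderiv (pderiv ?F)) z / 4"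
    by (simp add: d2 poly_pcompose z_def)
  have hyp: "poly ([:0, 1, -1:] * pderiv (pderiv ?F) + [:1, -2:] * pderiv ?F
          + smult (real n * (real n + 1)) ?F) z = 0"
    using legendre_hyp_poly_ode[of n] by simp
  have x: "x = 1 - 2 * z"
    by (simp add: z_def)
  show "poly (gegenbauer_op 2 (real n * (real n + 1)) (legendre_poly n)) x = poly 0 x"
    using hyp unfolding poly_gegenbauer_op p0 p1 p2 unfolding x
    by (simp add: algebra_simps power2_eq_square)
qed

abbreviation legendre_deriv :: "nat \<Rightarrow> nat \<Rightarrow> real poly" where
  "legendre_deriv n j \<equiv> (pderiv ^^ j) (legendre_poly n)"

lemma legendre_deriv_ode:
  "gegenbauer_op (2 * (real j + 1)) ((real n - real j) * (real n + real j + 1)) (legendre_deriv n j) = 0"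
  using arg_cong[OF legendre_poly_ode[of n], of "pderiv ^^ j"]
  by (simp add: higher_pderiv_gegenbauer_op algebra_simps)

lemma degree_legendre_poly: "degree (legendre_poly n) \<le> n"
  unfolding legendre_poly_def
proof (rule degree_sum_le)
  fix k assume "k \<in> {..n}"
  then have "degree ([:1/2, -1/2:] ^ k :: real poly) \<le> n"
    using degree_power_le[of "[:1/2, -1/2:] :: real poly" k] by simp
  then show "degree (smult (pochhammer (- real n) k * pochhammer (real n + 1) k / (fact k)\<^sup>2)
              ([:1/2, -1/2:] ^ k)) \<le> n"
    using degree_smult_le le_trans by blast
qed simp

lemma coeff_legendre_deriv_eq_0: "n < k + j \<Longrightarrow> coeff (legendre_deriv n j) k = 0"
  by (simp add: coeff_higher_pderiv coeff_eq_0[OF le_less_trans[OF degree_legendre_poly]] add.commute)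

lemma coeff_legendre_deriv_Suc_Suc:
  "(real k + 1) * (real k + 2) * coeff (legendre_deriv n j) (k + 2)
     = (real k + real j - real n) * (real n + real j + real k + 1) * coeff (legendre_deriv n j) k"
  using arg_cong[OF legendre_deriv_ode[of j n], of "\<lambda>p. coeff p k"]
  unfolding coeff_gegenbauer_op by (simp add: algebra_simps)

lemma coeff_legendre_deriv_odd: "odd (n - j - k) \<Longrightarrow> coeff (legendre_deriv n j) k = 0"
proof (induction "n - k" arbitrary: k rule: less_induct)
  case less
  show ?case
  proof (cases "n < k + j")
    case True
    then show ?thesis by (rule coeff_legendre_deriv_eq_0)
  next
    case False
    have kj: "k + j < n"
    proof (rule ccontr)
      assume "\<not> k + j < n"
      with False have "n - j - k = 0" by simp
      with less.prems show False by simp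
    qed
    have "coeff (legendre_deriv n j) (k + 2) = 0"
    proof (cases "n < k + 2 + j")
      case True
      then show ?thesis by (rule coeff_legendre_deriv_eq_0)
    next
      case False
      then have "n - j - k = n - j - (k + 2) + 2" by simp
      with less.prems have "odd (n - j - (k + 2))" by simp
      with kj show ?thesis by (intro less.hyps) auto
    qed
    then have "(real k + real j - real n) * (real n + real j + real k + 1)
        * coeff (legendre_deriv n j) k = 0"
      using coeff_legendre_deriv_Suc_Suc[of k j n] by simp
    moreover from kj have "real k + real j - real n \<noteq> 0" by simp
    moreover have "real n + real j + real k + 1 \<noteq> 0" by linarith
    ultimately show ?thesis by simp
  qed
qed

lemma poly_legendre_poly_1: "poly (legendre_poly n) 1 = 1"
  by (simp add: legendre_poly_def poly_sum)

lemma poly_legendre_poly_minus_1: "poly (legendre_poly n) (-1) = (-1) ^ n"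
proof -
  have parity: "coeff (legendre_poly n) i * (-1) ^ i = (-1) ^ n * coeff (legendre_poly n) i" for i
  proof (cases "n < i \<or> odd (n - i)")
    case True
    then have "coeff (legendre_poly n) i = 0"
      using coeff_legendre_deriv_odd[of n 0 i] coeff_legendre_deriv_eq_0[of n i 0] by auto
    then show ?thesis by simp
  next
    case False
    then have "(-1 :: real) ^ (n - i) = 1"
      by (simp only: de_Morgan_disj not_not neg_one_even_power)
    moreover from False have "(-1 :: real) ^ n = (-1) ^ (n - i) * (-1) ^ i"
      by (simp add: power_add[symmetric])
    ultimately show ?thesis by simp
  qed
  have "poly (legendre_poly n) (-1)
      = (\<Sum>i\<le>degree (legendre_poly n). coeff (legendre_poly n) i * (-1) ^ i)"
    by (simp add: poly_altdef)
  also have "\<dots> = (-1) ^ n * poly (legendre_poly n) 1"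
    by (simp add: parity poly_altdef sum_distrib_left)
  finally show ?thesis by (simp add: poly_legendre_poly_1)
qed

section \<open>Integrals over \<open>[-1, 1]\<close>\<close>

definition poly_int :: "real poly \<Rightarrow> real" where
  "poly_int p = integral {-1..1} (poly p)"

lemma has_integral_poly_int: "(poly p has_integral poly_int p) {-1..1}"
  unfolding poly_int_def
  by (intro integrable_integral integrable_continuous_interval continuous_intros)

lemma poly_int_add: "poly_int (p + q) = poly_int p + poly_int q"
  unfolding poly_int_def poly_add[abs_def]
  by (intro integral_unique has_integral_add has_integral_poly_int[unfolded poly_int_def])

lemma poly_int_diff: "poly_int (p - q) = poly_int p - poly_int q"
  unfolding poly_int_def poly_diff[abs_def]
  by (intro integral_unique has_integral_diff has_integral_poly_int[unfolded poly_int_def])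

lemma poly_int_smult: "poly_int (smult a p) = a * poly_int p"
  unfolding poly_int_def poly_smult[abs_def]
  by (intro integral_unique has_integral_mult_right has_integral_poly_int[unfolded poly_int_def])

lemma poly_int_minus: "poly_int (- p) = - poly_int p"
  using poly_int_smult[of "-1" p] by simp

lemma poly_int_0 [simp]: "poly_int 0 = 0"
  by (simp add: poly_int_def poly_0[abs_def])

lemma poly_int_sum: "poly_int (\<Sum>a\<in>A. f a) = (\<Sum>a\<in>A. poly_int (f a))"
  by (induction A rule: infinite_finite_induct) (simp_all add: poly_int_add)

lemma poly_int_pderiv: "poly_int (pderiv p) = poly p 1 - poly p (-1)"
proof -
  have "(poly (pderiv p) has_integral (poly p 1 - poly p (-1))) {-1..1}"
    by (intro fundamental_theorem_of_calculus)
       (auto intro!: DERIV_subset[OF poly_DERIV]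
         simp: has_real_derivative_iff_has_vector_derivative[symmetric])
  then show ?thesis
    by (simp add: has_integral_iff poly_int_def)
qed

lemma poly_int_by_parts:
  "poly_int (p * pderiv q) = poly (p * q) 1 - poly (p * q) (-1) - poly_int (pderiv p * q)"
  using poly_int_pderiv[of "p * q"] by (simp add: pderiv_mult poly_int_add mult_ac)

lemma has_integral_sin_poly_cos: "((\<lambda>\<theta>. sin \<theta> * poly r (cos \<theta>)) has_integral poly_int r) {0..pi}"
proof -
  have "((\<lambda>\<theta>. sin \<theta> *\<^sub>R poly (pcompose r [:0, -1:]) (- cos \<theta>))
      has_integral integral {- cos 0..- cos pi} (poly (pcompose r [:0, -1:]))) {0..pi}"
  proof (rule has_integral_substitution[where c = "-1" and d = 1])
    show "continuous_on {-1..1} (poly (pcompose r [:0, -1:]))"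
      by (intro continuous_intros)
    show "((\<lambda>\<theta>. - cos \<theta>) has_real_derivative sin \<theta>) (at \<theta> within {0..pi})" for \<theta>
      by (auto intro!: derivative_eq_intros)
  qed auto
  moreover have "integral {-1..1} (poly (pcompose r [:0, -1:])) = poly_int r"
    using Henstock_Kurzweil_Integration.integral_reflect_real[of 1 "-1" "poly r"]
    by (simp add: poly_int_def poly_pcompose[abs_def])
  ultimately show ?thesis
    by (simp add: poly_pcompose)
qed

lemma weighted_pderiv_gegenbauer_op:
  assumes "gegenbauer_op (2 * (real j + 1)) b q = 0"
  shows "pderiv ([:1, 0, -1:] ^ Suc j * pderiv q) = - smult b ([:1, 0, -1:] ^ j * q)"
proof -
  have "pderiv ([:1, 0, -1:] ^ Suc j * pderiv q)
      = [:1, 0, -1:] ^ j * (gegenbauer_op (2 * (real j + 1)) b q - smult b q)"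
    unfolding pderiv_mult pderiv_power_Suc
    by (rule poly_ext)
       (simp add: poly_gegenbauer_op pderiv_pCons algebra_simps power2_eq_square)
  then show ?thesis
    unfolding assms by simp
qed

lemma poly_int_gegenbauer_op_by_parts:
  assumes "gegenbauer_op (2 * (real j + 1)) b q = 0"
  shows "b * poly_int ([:1, 0, -1:] ^ j * r * q)
    = poly_int ([:1, 0, -1:] ^ Suc j * pderiv r * pderiv q)"
proof -
  have "r * pderiv ([:1, 0, -1:] ^ Suc j * pderiv q) = smult (- b) ([:1, 0, -1:] ^ j * r * q)"
    unfolding weighted_pderiv_gegenbauer_op[OF assms] by (simp add: mult_ac)
  then have "b * poly_int ([:1, 0, -1:] ^ j * r * q)
      = - poly_int (r * pderiv ([:1, 0, -1:] ^ Suc j * pderiv q))"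
    by (simp add: poly_int_smult poly_int_minus)
  also have "\<dots> = poly_int (pderiv r * ([:1, 0, -1:] ^ Suc j * pderiv q))"
    by (simp add: poly_int_by_parts del: power_Suc)
  finally show ?thesis
    by (simp add: mult_ac del: power_Suc)
qed

lemma legendre_deriv_orthogonal:
  "degree r + j < n \<Longrightarrow> poly_int ([:1, 0, -1:] ^ j * r * legendre_deriv n j) = 0"
proof (induction "degree r" arbitrary: r j rule: less_induct)
  case less
  have "(real n - real j) * (real n + real j + 1) * poly_int ([:1, 0, -1:] ^ j * r * legendre_deriv n j)
      = poly_int ([:1, 0, -1:] ^ Suc j * pderiv r * legendre_deriv n (Suc j))"
    using poly_int_gegenbauer_op_by_parts[OF legendre_deriv_ode] by simp
  also have "\<dots> = 0"
  proof (cases "degree r = 0")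
    case True
    then have "pderiv r = 0" by (simp add: pderiv_eq_0_iff)
    then show ?thesis by simp
  next
    case False
    with less.prems show ?thesis
      by (intro less.hyps) (auto simp: degree_pderiv)
  qed
  finally show ?case
    using less.prems by simp
qed

lemma pderiv_weight_monom:
  "pderiv ([:1, 0, -1:] ^ Suc i * monom 1 t)
     = [:1, 0, -1:] ^ Suc i * monom (real t) (t - 1)
       - smult (2 * (real i + 1)) ([:1, 0, -1:] ^ i * monom 1 (Suc t))"
  unfolding pderiv_mult pderiv_power_Suc pderiv_monom
  by (rule poly_ext) (simp add: poly_monom pderiv_pCons algebra_simps)

lemma legendre_deriv_top_moment:
  "i < n \<Longrightarrow>
    poly_int ([:1, 0, -1:] ^ i * monom 1 (n - Suc i) * legendre_deriv n (Suc i)) = 2 ^ Suc i * fact i"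
proof (induction i)
  case 0
  have "poly_int (pderiv (monom 1 (n - 1)) * legendre_poly n) = 0"
    using legendre_deriv_orthogonal[of "pderiv (monom 1 (n - 1))" 0 n] 0
    by (simp add: degree_pderiv degree_monom_eq)
  with 0 show ?case
    by (simp add: poly_int_by_parts poly_monom poly_legendre_poly_1 poly_legendre_poly_minus_1
        flip: power_add)
next
  case (Suc i)
  define t where "t = n - Suc (Suc i)"
  have n: "n = i + 2 + t"
    using Suc.prems by (simp add: t_def)
  have "poly_int ([:1, 0, -1:] ^ Suc i * monom 1 t * legendre_deriv n (Suc (Suc i)))
      = - poly_int (pderiv ([:1, 0, -1:] ^ Suc i * monom 1 t) * legendre_deriv n (Suc i))"
    using poly_int_by_parts[of "[:1, 0, -1:] ^ Suc i * monom 1 t" "legendre_deriv n (Suc i)"]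
    by (simp del: power_Suc)
  also have "\<dots> = 2 * (real i + 1)
        * poly_int ([:1, 0, -1:] ^ i * monom 1 (Suc t) * legendre_deriv n (Suc i))
      - poly_int ([:1, 0, -1:] ^ Suc i * monom (real t) (t - 1) * legendre_deriv n (Suc i))"
    unfolding pderiv_weight_monom ring_distribs mult_smult_left poly_int_diff poly_int_smult
    by (simp add: mult.assoc)
  also have "poly_int ([:1, 0, -1:] ^ Suc i * monom (real t) (t - 1) * legendre_deriv n (Suc i)) = 0"
    using n degree_monom_le[of "real t" "t - 1"] by (intro legendre_deriv_orthogonal) linarith
  also have "Suc t = n - Suc i"
    by (simp add: n)
  finally show ?case
    using Suc by (simp add: t_def)
qed

lemma legendre_deriv_moment:
  assumes "i < n" "k \<le> n - Suc i" "even (n - Suc i - k)"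
  shows "poly_int ([:1, 0, -1:] ^ i * monom 1 k * legendre_deriv n (Suc i)) = 2 ^ Suc i * fact i"
  using assms(2,3)
proof (induction "n - Suc i - k" arbitrary: k rule: less_induct)
  case less
  show ?case
  proof (cases "k = n - Suc i")
    case True
    with legendre_deriv_top_moment[OF assms(1)] show ?thesis by simp
  next
    case False
    have "n - Suc i - k \<noteq> 1"
    proof
      assume "n - Suc i - k = 1"
      with less.prems(2) have "even (1 :: nat)" by argo
      then show False by simp
    qed
    with False less.prems(1) have k: "k + 2 \<le> n - Suc i"
      by linarith
    have weight_split: "([:1, 0, -1:] ^ i * monom 1 k :: real poly)
        = [:1, 0, -1:] ^ i * monom 1 (k + 2) + [:1, 0, -1:] ^ Suc i * monom 1 k"
      by (rule poly_ext) (simp add: poly_monom algebra_simps)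
    have "poly_int ([:1, 0, -1:] ^ Suc i * monom 1 k * legendre_deriv n (Suc i)) = 0"
      using k by (intro legendre_deriv_orthogonal) (simp add: degree_monom_eq)
    moreover have "poly_int ([:1, 0, -1:] ^ i * monom 1 (k + 2) * legendre_deriv n (Suc i))
        = 2 ^ Suc i * fact i"
      using k less.prems by (intro less.hyps) auto
    ultimately show ?thesis
      by (simp add: weight_split ring_distribs poly_int_add del: power_Suc)
  qed
qed

text \<open>Only the coefficients of the same parity as the degree survive, and each contributes the
  same moment.\<close>
lemma legendre_deriv_reproducing:
  assumes "i < n"
  shows "poly_int ([:1, 0, -1:] ^ i * pcompose (legendre_deriv n (Suc i)) [:0, x:]
      * legendre_deriv n (Suc i))
    = 2 ^ Suc i * fact i * poly (legendre_deriv n (Suc i)) x"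
proof -
  let ?Q = "legendre_deriv n (Suc i)"
  have "degree (pcompose ?Q [:0, x:]) \<le> degree ?Q"
    by (rule degree_le) (simp add: coeff_pcompose_linear coeff_eq_0)
  from poly_as_sum_of_monoms'[OF this]
  have "pcompose ?Q [:0, x:] = (\<Sum>k\<le>degree ?Q. smult (x ^ k * coeff ?Q k) (monom 1 k))"
    by (simp add: coeff_pcompose_linear smult_monom)
  then have "poly_int ([:1, 0, -1:] ^ i * pcompose ?Q [:0, x:] * ?Q)
      = poly_int (\<Sum>k\<le>degree ?Q. smult (x ^ k * coeff ?Q k) ([:1, 0, -1:] ^ i * monom 1 k * ?Q))"
    by (simp only: sum_distrib_left sum_distrib_right mult_smult_left mult_smult_right)
  also have "\<dots> = (\<Sum>k\<le>degree ?Q. x ^ k * coeff ?Q k * poly_int ([:1, 0, -1:] ^ i * monom 1 k * ?Q))"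
    by (simp only: poly_int_sum poly_int_smult)
  also have "\<dots> = (\<Sum>k\<le>degree ?Q. x ^ k * coeff ?Q k * (2 ^ Suc i * fact i))"
  proof (rule sum.cong)
    fix k
    show "x ^ k * coeff ?Q k * poly_int ([:1, 0, -1:] ^ i * monom 1 k * ?Q)
        = x ^ k * coeff ?Q k * (2 ^ Suc i * fact i)"
    proof (cases "coeff ?Q k = 0")
      case False
      then have "\<not> n < k + Suc i" "\<not> odd (n - Suc i - k)"
        using coeff_legendre_deriv_eq_0[of n k "Suc i"] coeff_legendre_deriv_odd[of n "Suc i" k]
        by blast+
      then have "k \<le> n - Suc i" "even (n - Suc i - k)"
        by (linarith, simp only: not_not)
      then have "poly_int ([:1, 0, -1:] ^ i * monom 1 k * ?Q) = 2 ^ Suc i * fact i"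
        by (rule legendre_deriv_moment[OF assms])
      then show ?thesis by simp
    qed simp
  qed simp
  also have "\<dots> = 2 ^ Suc i * fact i * poly ?Q x"
    by (simp add: poly_altdef sum_distrib_left algebra_simps)
  finally show ?thesis .
qed

section \<open>Chebyshev polynomials\<close>

fun chebyshev :: "nat \<Rightarrow> real poly" where
  "chebyshev 0 = 1"
| "chebyshev (Suc 0) = [:0, 1:]"
| "chebyshev (Suc (Suc k)) = smult 2 ([:0, 1:] * chebyshev (Suc k)) - chebyshev k"

lemma poly_chebyshev_cos: "poly (chebyshev k) (cos t) = cos (real k * t)"
proof (induction k rule: chebyshev.induct)
  case (3 k)
  have "cos ((real k + 1) * t + t) + cos ((real k + 1) * t - t) = 2 * cos t * cos ((real k + 1) * t)"
    by (simp add: cos_add cos_diff)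
  with 3 show ?case
    by (simp add: algebra_simps)
qed simp_all

lemma degree_chebyshev: "degree (chebyshev k) \<le> k"
  and coeff_chebyshev_top: "coeff (chebyshev k) k = (if k = 0 then 1 else 2 ^ (k - 1))"
proof (induction k rule: chebyshev.induct)
  case (3 k)
  { case 1
    have "degree (smult 2 ([:0, 1:] * chebyshev (Suc k))) \<le> Suc (Suc k)"
      using 3(1) by (simp add: degree_pCons_le le_trans[OF degree_pCons_le])
    with 3(3) show ?case
      by (auto intro: le_trans[OF degree_diff_le])
  next
    case 2
    from 3 show ?case
      by (simp add: coeff_eq_0)
  }
qed simp_all

lemma poly_eq_0_if_zero_on_cos:
  fixes r :: "real poly"
  assumes "\<And>t. poly r (cos t) = 0"
  shows "r = 0"
proof (rule ccontr)
  assume "r \<noteq> 0"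
  then have "finite {x. poly r x = 0}"
    by (rule poly_roots_finite)
  moreover have "{-1..1} \<subseteq> {x. poly r x = 0}"
  proof
    fix x :: real
    assume "x \<in> {-1..1}"
    then have "cos (arccos x) = x" by (simp add: cos_arccos)
    with assms[of "arccos x"] show "x \<in> {x. poly r x = 0}" by simp
  qed
  ultimately have "finite {-1..1 :: real}"
    by (rule finite_subset[rotated])
  then show False
    using infinite_Icc[of "-1 :: real" 1] by simp
qed

lemma chebyshev_ode: "gegenbauer_op 1 ((real k)\<^sup>2) (chebyshev k) = 0"
proof (rule poly_eq_0_if_zero_on_cos)
  fix t :: real
  let ?T = "chebyshev k"
  have T: "(\<lambda>t. poly ?T (cos t)) = (\<lambda>t. cos (real k * t))"
    by (simp add: poly_chebyshev_cos)
  have "((\<lambda>t. poly ?T (cos t)) has_real_derivative - sin t * poly (pderiv ?T) (cos t)) (at t)"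
    "((\<lambda>t. cos (real k * t)) has_real_derivative - real k * sin (real k * t)) (at t)" for t
    by (auto intro!: derivative_eq_intros)
  then have T': "(\<lambda>t. - sin t * poly (pderiv ?T) (cos t)) = (\<lambda>t. - real k * sin (real k * t))"
    unfolding T by (auto intro: DERIV_unique)
  have "((\<lambda>t. - sin t * poly (pderiv ?T) (cos t)) has_real_derivative
      (sin t)\<^sup>2 * poly (pderiv (pderiv ?T)) (cos t) - cos t * poly (pderiv ?T) (cos t)) (at t)"
    "((\<lambda>t. - real k * sin (real k * t)) has_real_derivative - (real k)\<^sup>2 * cos (real k * t)) (at t)"
    by (auto intro!: derivative_eq_intros simp: power2_eq_square)
  then have "(sin t)\<^sup>2 * poly (pderiv (pderiv ?T)) (cos t) - cos t * poly (pderiv ?T) (cos t)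
      = - (real k)\<^sup>2 * cos (real k * t)"
    unfolding T' by (rule DERIV_unique)
  then show "poly (gegenbauer_op 1 ((real k)\<^sup>2) ?T) (cos t) = 0"
    by (simp add: poly_gegenbauer_op poly_chebyshev_cos sin_squared_eq)
qed

lemma chebyshev_ode_unique:
  assumes "gegenbauer_op 1 ((real m)\<^sup>2) r = 0" and "coeff r m = 0"
  shows "r = 0"
proof -
  have rec: "((real m)\<^sup>2 - (real k)\<^sup>2) * coeff r k = - (real k + 1) * (real k + 2) * coeff r (k + 2)"
    for k
    using arg_cong[OF assms(1), of "\<lambda>p. coeff p k"]
    unfolding coeff_gegenbauer_op by (simp add: algebra_simps power2_eq_square)
  have "coeff r k = 0" for k
  proof (induction "degree r - k" arbitrary: k rule: less_induct)
    case less
    show ?case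
    proof (cases "degree r < k \<or> k = m")
      case True
      with assms(2) show ?thesis by (auto simp: coeff_eq_0)
    next
      case False
      then have "coeff r (k + 2) = 0"
        using less.hyps[of "k + 2"] by (cases "degree r < k + 2") (auto simp: coeff_eq_0)
      moreover from False have "(real m)\<^sup>2 - (real k)\<^sup>2 \<noteq> 0"
        by (simp add: power2_eq_iff)
      ultimately show ?thesis
        using rec[of k] by simp
    qed
  qed
  then show ?thesis
    by (simp add: poly_eq_iff)
qed

section \<open>Integrals of polynomials depending on a parameter\<close>

definition poly_integral :: "real set \<Rightarrow> (real \<Rightarrow> real poly) \<Rightarrow> nat \<Rightarrow> real poly" where
  "poly_integral S F N = (\<Sum>j\<le>N. monom (integral S (\<lambda>t. coeff (F t) j)) j)"

lemma coeff_poly_integral: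
  "coeff (poly_integral S F N) j = (if j \<le> N then integral S (\<lambda>t. coeff (F t) j) else 0)"
  by (simp add: poly_integral_def coeff_sum coeff_monom)

lemma has_integral_poly_integral:
  assumes "\<And>t. degree (F t) \<le> N" and "\<And>j. (\<lambda>t. coeff (F t) j) integrable_on S"
  shows "((\<lambda>t. poly (F t) c) has_integral poly (poly_integral S F N) c) S"
proof -
  have "poly (F t) c = (\<Sum>j\<le>N. c ^ j * coeff (F t) j)" for t
    using poly_as_sum_of_monoms'[OF assms(1)[of t]]
    by (metis (no_types, lifting) poly_monom poly_sum sum.cong mult.commute)
  moreover have "((\<lambda>t. \<Sum>j\<le>N. c ^ j * coeff (F t) j)
      has_integral (\<Sum>j\<le>N. c ^ j * integral S (\<lambda>t. coeff (F t) j))) S"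
    by (intro has_integral_sum has_integral_mult_right integrable_integral assms(2)) simp
  ultimately show ?thesis
    by (simp add: poly_integral_def poly_sum poly_monom mult.commute)
qed

lemma pderiv_poly_integral:
  assumes "\<And>t. degree (F t) \<le> N"
  shows "pderiv (poly_integral S F N) = poly_integral S (\<lambda>t. pderiv (F t)) N"
proof (rule poly_eqI)
  fix i
  have "coeff (F t) (Suc N) = 0" for t
    using assms[of t] by (simp add: coeff_eq_0)
  then show "coeff (pderiv (poly_integral S F N)) i = coeff (poly_integral S (\<lambda>t. pderiv (F t)) N) i"
    by (cases "i = N") (auto simp: coeff_pderiv coeff_poly_integral)
qed

lemma has_integral_higher_pderiv_poly_integral:
  assumes "\<And>t. degree (F t) \<le> N" and "\<And>i. (\<lambda>t. coeff (F t) i) integrable_on S"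
  shows "((\<lambda>t. poly ((pderiv ^^ j) (F t)) c)
    has_integral poly ((pderiv ^^ j) (poly_integral S F N)) c) S"
  using assms
proof (induction j arbitrary: F)
  case 0
  then show ?case
    by (simp add: has_integral_poly_integral)
next
  case (Suc j)
  have "degree (pderiv (F t)) \<le> N" for t
    using Suc.prems(1)[of t] by (simp add: degree_pderiv)
  moreover have "(\<lambda>t. coeff (pderiv (F t)) i) integrable_on S" for i
    using Suc.prems(2)[of "Suc i"] by (simp add: coeff_pderiv integrable_on_mult_right)
  ultimately show ?case
    using Suc.IH[of "\<lambda>t. pderiv (F t)"]
    by (simp add: pderiv_poly_integral[OF Suc.prems(1)] funpow_Suc_right del: funpow.simps)
qed

lemma higher_pderiv_pcompose_linear:
  "(pderiv ^^ j) (pcompose p [:a, b:]) = smult (b ^ j) (pcompose ((pderiv ^^ j) p) [:a, b:])"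
  for p :: "real poly"
proof (induction j)
  case (Suc j)
  then show ?case
    by (simp add: pderiv_smult pderiv_pcompose pderiv_pCons mult.commute)
qed simp

lemma coeff_pcompose_linear_taylor:
  "coeff (pcompose p [:a, b:]) j = b ^ j * poly ((pderiv ^^ j) p) a / fact j"
  for p :: "real poly"
proof -
  have "fact j * coeff (pcompose p [:a, b:]) j = coeff ((pderiv ^^ j) (pcompose p [:a, b:])) 0"
    by (simp add: coeff_higher_pderiv pochhammer_fact)
  also have "\<dots> = b ^ j * poly ((pderiv ^^ j) p) a"
    by (simp add: higher_pderiv_pcompose_linear poly_0_coeff_0[symmetric] poly_pcompose)
  finally show ?thesis
    by (simp add: field_simps)
qed

section \<open>Green's identity in the polar angle\<close>

lemma legendre_ode_polar_derivative:
  fixes p :: "real poly" and x s c lam :: real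
  assumes ode: "gegenbauer_op 2 lam p = 0" and xs: "x\<^sup>2 + s\<^sup>2 = 1"
  defines "z \<equiv> \<lambda>\<theta>. x * cos \<theta> + s * sin \<theta> * c"
  shows "((\<lambda>\<theta>. sin \<theta> * (poly (pderiv p) (z \<theta>) * (s * cos \<theta> * c - x * sin \<theta>))) has_real_derivative
      c * s * poly (pderiv p) (z \<theta>)
      - sin \<theta> * (lam * poly p (z \<theta>) + (1 - c\<^sup>2) * s\<^sup>2 * poly (pderiv (pderiv p)) (z \<theta>))) (at \<theta>)"
proof -
  define u y where "u = cos \<theta>" and "y = sin \<theta>"
  define P0 P1 P2 where "P0 = poly p (z \<theta>)" and "P1 = poly (pderiv p) (z \<theta>)"
    and "P2 = poly (pderiv (pderiv p)) (z \<theta>)"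
  define zt where "zt = s * u * c - x * y"
  have uy: "u\<^sup>2 + y\<^sup>2 = 1"
    by (simp add: u_def y_def)
  have ode_z: "(1 - (x * u + s * y * c)\<^sup>2) * P2 - 2 * (x * u + s * y * c) * P1 + lam * P0 = 0"
    using arg_cong[OF ode, of "\<lambda>q. poly q (z \<theta>)"]
    by (simp add: poly_gegenbauer_op P0_def P1_def P2_def z_def u_def y_def)
  have "((\<lambda>\<theta>. sin \<theta> * (poly (pderiv p) (z \<theta>) * (s * cos \<theta> * c - x * sin \<theta>))) has_real_derivative
      u * (P1 * zt) + y * (P2 * zt * zt - P1 * (x * u + s * y * c))) (at \<theta>)"
    unfolding z_def u_def y_def P1_def P2_def zt_def
    by (auto intro!: derivative_eq_intros simp: algebra_simps)
  moreover have "u * (P1 * zt) + y * (P2 * zt * zt - P1 * (x * u + s * y * c))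
      - (c * s * P1 - y * (lam * P0 + (1 - c\<^sup>2) * s\<^sup>2 * P2))
    = y * ((1 - (x * u + s * y * c)\<^sup>2) * P2 - 2 * (x * u + s * y * c) * P1 + lam * P0)
      + y * P2 * ((x\<^sup>2 + s\<^sup>2 * c\<^sup>2) * (u\<^sup>2 + y\<^sup>2 - 1) + (x\<^sup>2 + s\<^sup>2 - 1))
      + s * c * P1 * (u\<^sup>2 + y\<^sup>2 - 1)"
    by (simp add: zt_def algebra_simps power2_eq_square)
  ultimately show ?thesis
    using ode_z uy xs by (simp add: P0_def P1_def P2_def u_def y_def)
qed

lemma assoc_legendre_ode_polar_derivative:
  fixes q :: "real poly"
  assumes ode: "gegenbauer_op (2 * (real (Suc k) + 1)) (lam - real (Suc k) * (real (Suc k) + 1)) q = 0"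
  shows "((\<lambda>\<theta>. real (Suc k) * cos \<theta> * sin \<theta> ^ Suc k * poly q (cos \<theta>)
        - sin \<theta> ^ (k + 3) * poly (pderiv q) (cos \<theta>)) has_real_derivative
      ((real (Suc k))\<^sup>2 - lam * (sin \<theta>)\<^sup>2) * sin \<theta> ^ k * poly q (cos \<theta>)) (at \<theta>)"
proof -
  define m where "m = real (Suc k)"
  define u y where "u = cos \<theta>" and "y = sin \<theta>"
  define Q0 Q1 Q2 where "Q0 = poly q u" and "Q1 = poly (pderiv q) u"
    and "Q2 = poly (pderiv (pderiv q)) u"
  have uy: "u\<^sup>2 + y\<^sup>2 = 1"
    by (simp add: u_def y_def)
  have ode_u: "(1 - u\<^sup>2) * Q2 - 2 * (m + 1) * u * Q1 + (lam - m * (m + 1)) * Q0 = 0"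
    using arg_cong[OF ode, of "\<lambda>r. poly r u"]
    by (simp add: poly_gegenbauer_op Q0_def Q1_def Q2_def m_def algebra_simps)
  have deriv: "((\<lambda>\<theta>. real (Suc k) * cos \<theta> * sin \<theta> ^ Suc k * poly q (cos \<theta>)
        - sin \<theta> ^ (k + 3) * poly (pderiv q) (cos \<theta>)) has_real_derivative
      y ^ k * (m * m * u * u * Q0 - m * y * y * Q0 - 2 * (m + 1) * u * y * y * Q1 + y ^ 4 * Q2)) (at \<theta>)"
    unfolding m_def u_def y_def Q0_def Q1_def Q2_def
    by (intro derivative_eq_intros; (rule refl)?)
       (simp add: algebra_simps power_add numeral_3_eq_3 numeral_2_eq_2 power4_eq_xxxx)
  have "m * m * u * u * Q0 - m * y * y * Q0 - 2 * (m + 1) * u * y * y * Q1 + y ^ 4 * Q2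
      - (m\<^sup>2 - lam * y\<^sup>2) * Q0
    = y\<^sup>2 * ((1 - u\<^sup>2) * Q2 - 2 * (m + 1) * u * Q1 + (lam - m * (m + 1)) * Q0)
      + (m\<^sup>2 * Q0 + y\<^sup>2 * Q2) * (u\<^sup>2 + y\<^sup>2 - 1)"
    by (simp add: algebra_simps power2_eq_square power4_eq_xxxx)
  also have "\<dots> = 0"
    using ode_u uy by simp
  finally have "m * m * u * u * Q0 - m * y * y * Q0 - 2 * (m + 1) * u * y * y * Q1 + y ^ 4 * Q2
      = (m\<^sup>2 - lam * y\<^sup>2) * Q0"
    by simp
  with deriv show ?thesis
    by (simp add: m_def u_def y_def Q0_def mult_ac)
qed

text \<open>Both factors solve self-adjoint equations in \<open>\<theta>\<close>, so the integrand is the derivative of a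
  Wronskian-type expression, which vanishes at \<open>0\<close> and \<open>pi\<close>.\<close>
lemma polar_green_integral:
  fixes p q :: "real poly" and x s c lam :: real
  assumes ode_p: "gegenbauer_op 2 lam p = 0"
    and ode_q: "gegenbauer_op (2 * (real (Suc k) + 1)) (lam - real (Suc k) * (real (Suc k) + 1)) q = 0"
    and xs: "x\<^sup>2 + s\<^sup>2 = 1"
  defines "z \<equiv> \<lambda>\<theta>. x * cos \<theta> + s * sin \<theta> * c"
  shows "((\<lambda>\<theta>. ((1 - c\<^sup>2) * (s * sin \<theta>)\<^sup>2 * poly (pderiv (pderiv p)) (z \<theta>)
        - c * s * sin \<theta> * poly (pderiv p) (z \<theta>) + (real (Suc k))\<^sup>2 * poly p (z \<theta>))
      * (sin \<theta> ^ k * poly q (cos \<theta>))) has_integral 0) {0..pi}"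
    (is "(?F has_integral 0) _")
proof -
  define f where "f \<theta> = poly p (z \<theta>)" for \<theta>
  define g where "g \<theta> = sin \<theta> ^ Suc k * poly q (cos \<theta>)" for \<theta>
  define A where "A \<theta> = sin \<theta> * (poly (pderiv p) (z \<theta>) * (s * cos \<theta> * c - x * sin \<theta>))" for \<theta>
  define B where "B \<theta> = real (Suc k) * cos \<theta> * sin \<theta> ^ Suc k * poly q (cos \<theta>)
        - sin \<theta> ^ (k + 3) * poly (pderiv q) (cos \<theta>)" for \<theta>
  define \<Phi> where "\<Phi> \<theta> = A \<theta> * g \<theta> - f \<theta> * B \<theta>" for \<theta>
  have "(\<Phi> has_real_derivative - ?F \<theta>) (at \<theta>)" for \<theta>
  proof -
    have dA: "(A has_real_derivative c * s * poly (pderiv p) (z \<theta>)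
        - sin \<theta> * (lam * poly p (z \<theta>) + (1 - c\<^sup>2) * s\<^sup>2 * poly (pderiv (pderiv p)) (z \<theta>))) (at \<theta>)"
      unfolding A_def z_def by (rule legendre_ode_polar_derivative[OF ode_p xs])
    have dB: "(B has_real_derivative
        ((real (Suc k))\<^sup>2 - lam * (sin \<theta>)\<^sup>2) * sin \<theta> ^ k * poly q (cos \<theta>)) (at \<theta>)"
      unfolding B_def by (rule assoc_legendre_ode_polar_derivative[OF ode_q])
    have df: "(f has_real_derivative poly (pderiv p) (z \<theta>) * (s * cos \<theta> * c - x * sin \<theta>)) (at \<theta>)"
      unfolding f_def z_def by (auto intro!: derivative_eq_intros simp: algebra_simps)
    have dg: "(g has_real_derivative real (Suc k) * cos \<theta> * sin \<theta> ^ k * poly q (cos \<theta>)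
        - sin \<theta> ^ Suc (Suc k) * poly (pderiv q) (cos \<theta>)) (at \<theta>)"
      unfolding g_def by (intro derivative_eq_intros; (rule refl)?) (simp add: algebra_simps)
    from DERIV_diff[OF DERIV_mult[OF dA dg] DERIV_mult[OF df dB]] show ?thesis
      unfolding \<Phi>_def[abs_def]
      by (rule DERIV_cong)
         (simp add: A_def B_def f_def g_def algebra_simps power2_eq_square numeral_3_eq_3)
  qed
  then have "((\<lambda>\<theta>. - ?F \<theta>) has_integral \<Phi> pi - \<Phi> 0) {0..pi}"
    by (intro fundamental_theorem_of_calculus)
       (auto simp: has_real_derivative_iff_has_vector_derivative[symmetric]
         intro: has_field_derivative_at_within)
  moreover have "\<Phi> pi - \<Phi> 0 = 0"
    by (simp add: \<Phi>_def A_def B_def g_def numeral_3_eq_3)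
  ultimately show ?thesis
    by (simp add: has_integral_neg_iff)
qed

section \<open>The polar integral\<close>

text \<open>For \<open>m = Suc k\<close> this is \<open>(-1)^m P^m_n(cos \<theta>) / sin \<theta>\<close> with the singular factor cancelled.\<close>
definition polar_weight :: "nat \<Rightarrow> nat \<Rightarrow> real \<Rightarrow> real" where
  "polar_weight n k \<theta> = sin \<theta> ^ k * poly (legendre_deriv n (Suc k)) (cos \<theta>)"

definition polar_family :: "nat \<Rightarrow> nat \<Rightarrow> real \<Rightarrow> real \<Rightarrow> real \<Rightarrow> real poly" where
  "polar_family n k x s \<theta>
     = smult (polar_weight n k \<theta>) (pcompose (legendre_poly n) [:x * cos \<theta>, s * sin \<theta>:])"

definition polar_poly :: "nat \<Rightarrow> nat \<Rightarrow> real \<Rightarrow> real \<Rightarrow> real poly" where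
  "polar_poly n k x s = poly_integral {0..pi} (polar_family n k x s) n"

lemma poly_higher_pderiv_polar_family:
  "poly ((pderiv ^^ j) (polar_family n k x s \<theta>)) c
     = (s * sin \<theta>) ^ j * poly (legendre_deriv n j) (x * cos \<theta> + s * sin \<theta> * c) * polar_weight n k \<theta>"
  by (simp add: polar_family_def higher_pderiv_smult higher_pderiv_pcompose_linear poly_pcompose
      algebra_simps)

lemma coeff_polar_family:
  "coeff (polar_family n k x s \<theta>) j
     = polar_weight n k \<theta> * (s * sin \<theta>) ^ j * poly (legendre_deriv n j) (x * cos \<theta>) / fact j"
  by (simp add: polar_family_def coeff_pcompose_linear_taylor)

lemma has_integral_polar_family:
  "((\<lambda>\<theta>. poly ((pderiv ^^ j) (polar_family n k x s \<theta>)) c)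
     has_integral poly ((pderiv ^^ j) (polar_poly n k x s)) c) {0..pi}"
  unfolding polar_poly_def
proof (rule has_integral_higher_pderiv_poly_integral)
  fix \<theta>
  have "degree (polar_family n k x s \<theta>) \<le> degree (legendre_poly n) * degree [:x * cos \<theta>, s * sin \<theta>:]"
    unfolding polar_family_def by (meson degree_smult_le degree_pcompose_le order_trans)
  also have "\<dots> \<le> n * 1"
    by (intro mult_le_mono) (simp_all add: degree_legendre_poly)
  finally show "degree (polar_family n k x s \<theta>) \<le> n" by simp
next
  show "(\<lambda>\<theta>. coeff (polar_family n k x s \<theta>) i) integrable_on {0..pi}" for i
    unfolding coeff_polar_family polar_weight_def
    by (intro integrable_continuous_interval continuous_intros) simp
qed

lemma polar_poly_ode:
  assumes xs: "x\<^sup>2 + s\<^sup>2 = 1"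
  shows "gegenbauer_op 1 ((real (Suc k))\<^sup>2) (polar_poly n k x s) = 0"
proof (rule poly_ext)
  fix c :: real
  let ?F = "polar_family n k x s" and ?p = "polar_poly n k x s"
  have ode: "gegenbauer_op (2 * (real (Suc k) + 1))
      (real n * (real n + 1) - real (Suc k) * (real (Suc k) + 1)) (legendre_deriv n (Suc k)) = 0"
    using legendre_deriv_ode[of "Suc k" n] by (simp add: algebra_simps)
  have "((\<lambda>\<theta>. (1 - c\<^sup>2) * poly ((pderiv ^^ 2) (?F \<theta>)) c - c * poly ((pderiv ^^ 1) (?F \<theta>)) c
        + (real (Suc k))\<^sup>2 * poly ((pderiv ^^ 0) (?F \<theta>)) c) has_integral
      (1 - c\<^sup>2) * poly ((pderiv ^^ 2) ?p) c - c * poly ((pderiv ^^ 1) ?p) c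
        + (real (Suc k))\<^sup>2 * poly ((pderiv ^^ 0) ?p) c) {0..pi}"
    by (intro has_integral_add has_integral_diff has_integral_mult_right has_integral_polar_family)
  moreover have "((\<lambda>\<theta>. (1 - c\<^sup>2) * poly ((pderiv ^^ 2) (?F \<theta>)) c - c * poly ((pderiv ^^ 1) (?F \<theta>)) c
        + (real (Suc k))\<^sup>2 * poly ((pderiv ^^ 0) (?F \<theta>)) c) has_integral 0) {0..pi}"
    unfolding poly_higher_pderiv_polar_family polar_weight_def
    using polar_green_integral[OF legendre_poly_ode ode xs, of c]
    by (simp add: numeral_2_eq_2 algebra_simps)
  ultimately have "(1 - c\<^sup>2) * poly ((pderiv ^^ 2) ?p) c - c * poly ((pderiv ^^ 1) ?p) c
      + (real (Suc k))\<^sup>2 * poly ((pderiv ^^ 0) ?p) c = 0"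
    by (rule has_integral_unique)
  then show "poly (gegenbauer_op 1 ((real (Suc k))\<^sup>2) ?p) c = poly 0 c"
    by (simp add: poly_gegenbauer_op numeral_2_eq_2)
qed

lemma coeff_polar_poly:
  assumes "k < n"
  shows "coeff (polar_poly n k x s) (Suc k)
    = 2 ^ Suc k * s ^ Suc k * poly (legendre_deriv n (Suc k)) x / real (Suc k)"
proof -
  let ?Q = "legendre_deriv n (Suc k)"
  let ?R = "[:1, 0, -1:] ^ k * pcompose ?Q [:0, x:] * ?Q"
  have coeff_family: "coeff (polar_family n k x s \<theta>) (Suc k)
      = s ^ Suc k / fact (Suc k) * (sin \<theta> * poly ?R (cos \<theta>))" for \<theta>
  proof -
    have "1 - cos \<theta> * cos \<theta> = sin \<theta> * sin \<theta>"
      using sin_cos_squared_add[of \<theta>] by (simp add: power2_eq_square algebra_simps)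
    then have "sin \<theta> ^ k * sin \<theta> ^ k = (1 - cos \<theta> * cos \<theta>) ^ k"
      by (simp add: power_mult_distrib)
    then show ?thesis
      by (simp add: coeff_polar_family polar_weight_def poly_pcompose power_mult_distrib algebra_simps)
  qed
  have "coeff (polar_poly n k x s) (Suc k)
      = integral {0..pi} (\<lambda>\<theta>. coeff (polar_family n k x s \<theta>) (Suc k))"
    using assms by (simp add: polar_poly_def coeff_poly_integral)
  also have "\<dots> = s ^ Suc k / fact (Suc k) * poly_int ?R"
    by (simp only: coeff_family integral_mult_right integral_unique[OF has_integral_sin_poly_cos])
  also have "\<dots> = s ^ Suc k / fact (Suc k) * (2 ^ Suc k * fact k * poly ?Q x)"
    using legendre_deriv_reproducing[OF assms, of x] by simp
  also have "\<dots> = 2 ^ Suc k * s ^ Suc k * poly ?Q x / real (Suc k)"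
    by (simp add: field_simps del: of_nat_Suc)
  finally show ?thesis .
qed

lemma polar_poly_eq_chebyshev:
  assumes "x\<^sup>2 + s\<^sup>2 = 1" and "k < n"
  shows "polar_poly n k x s
    = smult (2 / real (Suc k) * s ^ Suc k * poly (legendre_deriv n (Suc k)) x) (chebyshev (Suc k))"
    (is "?p = smult ?A ?T")
proof -
  have "coeff (?p - smult ?A ?T) (Suc k) = 0"
    by (simp add: coeff_polar_poly[OF assms(2)] coeff_chebyshev_top del: of_nat_Suc)
  moreover have "gegenbauer_op 1 ((real (Suc k))\<^sup>2) (?p - smult ?A ?T) = 0"
    by (simp add: gegenbauer_op_diff gegenbauer_op_smult polar_poly_ode[OF assms(1)] chebyshev_ode
        del: of_nat_Suc)
  ultimately show ?thesis
    using chebyshev_ode_unique by fastforce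
qed

lemma legendre_polar_integral:
  assumes "x\<^sup>2 + s\<^sup>2 = 1" and "k < n"
  shows "((\<lambda>\<theta>. poly (legendre_poly n) (x * cos \<theta> + s * sin \<theta> * c) * polar_weight n k \<theta>)
      has_integral 2 / real (Suc k) * s ^ Suc k * poly (legendre_deriv n (Suc k)) x
        * poly (chebyshev (Suc k)) c) {0..pi}"
  using has_integral_polar_family[of 0 n k x s c,
      unfolded poly_higher_pderiv_polar_family polar_poly_eq_chebyshev[OF assms]]
  by simp

lemma ferrers_cos:
  assumes "0 < m" and "0 \<le> sin t"
  shows "ferrers m n (cos t) = (-1) ^ m * sin t ^ m * poly (legendre_deriv n m) (cos t)"
proof -
  have "(1 - (cos t)\<^sup>2) powr (real m / 2) = sin t ^ m"
  proof (cases "sin t = 0")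
    case True
    with assms(1) show ?thesis
      by (simp add: cos_squared_eq)
  next
    case False
    with assms(2) have "0 < sin t" by simp
    then have "(1 - (cos t)\<^sup>2) powr (real m / 2) = (sin t powr 2) powr (real m / 2)"
      by (simp add: sin_squared_eq[symmetric] powr_realpow)
    also have "\<dots> = sin t ^ m"
      unfolding powr_powr using \<open>0 < sin t\<close> by (simp add: powr_realpow)
    finally show ?thesis .
  qed
  then show ?thesis
    by (simp add: ferrers_def)
qed

lemma ferrers_cos_div_sin:
  assumes "0 < sin \<theta>"
  shows "ferrers (Suc k) n (cos \<theta>) * (1 / sin \<theta>) = (-1) ^ Suc k * polar_weight n k \<theta>"
  using ferrers_cos[of "Suc k" \<theta> n] assms by (simp add: polar_weight_def field_simps)

theorem theorem3p6:
  fixes m n :: nat and \<theta>' \<phi> \<phi>' :: real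
  assumes "1 \<le> m" and "m \<le> n"
    and "\<theta>' \<in> {0..pi}" and "\<phi> \<in> {0..<2*pi}" and "\<phi>' \<in> {0..<2*pi}"
  shows "((\<lambda>\<theta>. legendre n (cos \<theta> * cos \<theta>' + sin \<theta> * sin \<theta>' * cos (\<phi> - \<phi>'))
              * ferrers m n (cos \<theta>) * (1 / sin \<theta>))
          has_integral (2 / real m * ferrers m n (cos \<theta>') * cos (real m * (\<phi> - \<phi>')))) {0..pi}"
proof -
  obtain k where m: "m = Suc k"
    using assms(1) by (cases m) auto
  let ?P = "\<lambda>\<theta>. legendre n (cos \<theta> * cos \<theta>' + sin \<theta> * sin \<theta>' * cos (\<phi> - \<phi>'))"
  have "ferrers m n (cos \<theta>') = (-1) ^ m * sin \<theta>' ^ m * poly (legendre_deriv n m) (cos \<theta>')"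
    using assms(1,3) by (intro ferrers_cos) (auto intro: sin_ge_zero)
  then have integral: "((\<lambda>\<theta>. ?P \<theta> * ((-1) ^ m * polar_weight n k \<theta>))
      has_integral 2 / real m * ferrers m n (cos \<theta>') * cos (real m * (\<phi> - \<phi>'))) {0..pi}"
    using assms(2) has_integral_mult_right[of _ _ _ "(-1) ^ m",
        OF legendre_polar_integral[of "cos \<theta>'" "sin \<theta>'" k n "cos (\<phi> - \<phi>')"]]
    by (simp add: m legendre_def poly_chebyshev_cos algebra_simps)
  have "?P \<theta> * ferrers m n (cos \<theta>) * (1 / sin \<theta>) = ?P \<theta> * ((-1) ^ m * polar_weight n k \<theta>)"
    if "\<theta> \<in> {0..pi} - {0, pi}" for \<theta>
  proof -
    from that have "0 < sin \<theta>"
      by (auto intro: sin_gt_zero)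
    then show ?thesis
      by (simp only: m mult.assoc ferrers_cos_div_sin)
  qed
  then show ?thesis
    by (intro has_integral_spike_finite[OF _ _ integral, of "{0, pi}"]) auto
qed

end
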